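(* Let $n,p$ be positive integers with $D=n-p\ge1$, let $g:\{0,1\}^p\to\{0,1\}$ be a Boolean function whose algebraic normal form contains only non-linear terms, and define $f:\{0,1\}^n\to\{0,1\}^D$ by $f(\mathbf{x})=\mathbf{y}$ with $y_i=x_i+g(x_{i+1},\dots,x_{i+p})$ for $1\le i\le D$. If $\mathbf{x}$ is uniformly distributed on $\{0,1\}^n$, then $f(\mathbf{x})$ is uniformly distributed on $\{0,1\}^D$.
   Context: $+$ denotes addition over $GF(2)$ (XOR). "Only non-linear terms" means every monomial of the algebraic normal form of $g$ is a product of at least two input variables. *)

theory Defs
  imports "HOL-Probability.Probability_Mass_Function"
begin

text \<open>Bit vectors in {0,1}^m are bool lists of length m (True = 1); entry x_i (1-based)
is xs ! (i-1). Addition over GF(2) is XOR, i.e. (\<noteq>) on bool.\<close>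

text \<open>Evaluation of an algebraic normal form on p variables: the coefficient function a
selects the monomials (sets S of variable indices in {0..<p}); the value is the XOR of
the selected monomials, i.e. the parity of the number of selected monomials whose
variables are all 1.\<close>
definition anf_eval :: "nat \<Rightarrow> (nat set \<Rightarrow> bool) \<Rightarrow> bool list \<Rightarrow> bool" where
  "anf_eval p a xs = odd (card {S. S \<subseteq> {..<p} \<and> a S \<and> (\<forall>i\<in>S. xs ! i)})"

text \<open>Since the ANF is unique, existence of such a
representation is the same as the ANF containing only non-linear terms.\<close>
definition only_nonlinear_anf :: "nat \<Rightarrow> (bool list \<Rightarrow> bool) \<Rightarrow> bool" where
  "only_nonlinear_anf p g \<longleftrightarrow>
     (\<exists>a. (\<forall>S. a S \<longrightarrow> S \<subseteq> {..<p} \<and> 2 \<le> card S) \<and>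
          (\<forall>xs. length xs = p \<longrightarrow> g xs = anf_eval p a xs))"

text \<open>f(x) = y with y_i = x_i + g(x_{i+1},...,x_{i+p}), 1 \<le> i \<le> D = n - p
(0-based: y_j = xs!j XOR g(xs!(j+1), ..., xs!(j+p)), j < D).\<close>
definition shift_map :: "nat \<Rightarrow> nat \<Rightarrow> (bool list \<Rightarrow> bool) \<Rightarrow> bool list \<Rightarrow> bool list" where
  "shift_map n p g xs = map (\<lambda>j. xs ! j \<noteq> g (take p (drop (Suc j) xs))) [0..<n - p]"

end

theory Submission
  imports Defs
begin

text \<open>Read the coordinates from left to right: y_1 = x_1 + g(x_2, ..., x_(p+1)), while
  (y_2, ..., y_D) is the same kind of map applied to the tail (x_2, ..., x_n). For every
  fixed tail the uniform bit x_1 is masked by a constant, so y_1 is uniform and independent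
  of the tail, hence of (y_2, ..., y_D), which is uniform by induction on n. The argument
  uses nothing about g.\<close>

lemma pair_pmf_of_set:
  assumes "finite A" "A \<noteq> {}" "finite B" "B \<noteq> {}"
  shows "pair_pmf (pmf_of_set A) (pmf_of_set B) = pmf_of_set (A \<times> B)"
proof (rule pmf_eqI)
  fix z :: "'a \<times> 'b"
  show "pmf (pair_pmf (pmf_of_set A) (pmf_of_set B)) z = pmf (pmf_of_set (A \<times> B)) z"
    using assms by (cases z) (simp add: pmf_pair card_cartesian_product indicator_def)
qed

lemma pmf_of_set_lists_length_Suc:
  "pmf_of_set {xs :: 'a :: finite list. length xs = Suc m}
   = map_pmf (\<lambda>(x, xs). x # xs) (pair_pmf (pmf_of_set UNIV) (pmf_of_set {xs. length xs = m}))"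
proof -
  let ?L = "{xs :: 'a list. length xs = m}"
  have "replicate m undefined \<in> ?L"
    by simp
  then have nonempty: "?L \<noteq> {}"
    by blast
  have finite: "finite ?L"
    using finite_lists_length_eq[of "UNIV :: 'a set" m] by simp
  have "map_pmf (\<lambda>(x, xs). x # xs) (pair_pmf (pmf_of_set UNIV) (pmf_of_set ?L))
      = map_pmf (\<lambda>(x, xs). x # xs) (pmf_of_set (UNIV \<times> ?L))"
    using nonempty finite by (simp add: pair_pmf_of_set)
  also have "\<dots> = pmf_of_set ((\<lambda>(x, xs). x # xs) ` (UNIV \<times> ?L))"
    using nonempty finite by (intro map_pmf_of_set_inj) (auto simp: inj_on_def)
  also have "(\<lambda>(x, xs). x # xs) ` (UNIV \<times> ?L) = {xs. length xs = Suc m}"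
    by (auto simp: image_def length_Suc_conv)
  finally show ?thesis by simp
qed

lemma map_pmf_xor_uniform_bool:
  "map_pmf (\<lambda>x. x \<noteq> c) (pmf_of_set (UNIV :: bool set)) = pmf_of_set UNIV"
  by (rule map_pmf_of_set_bij_betw) (auto simp: bij_betw_def inj_on_def image_def)

lemma map_pmf_xor_Cons_pair:
  fixes h :: "'a \<Rightarrow> bool" and F :: "'a \<Rightarrow> bool list"
  shows "map_pmf (\<lambda>(x, xs). (x \<noteq> h xs) # F xs) (pair_pmf (pmf_of_set UNIV) M)
   = map_pmf (\<lambda>(b, ys). b # ys) (pair_pmf (pmf_of_set UNIV) (map_pmf F M))"
proof -
  let ?U = "pmf_of_set (UNIV :: bool set)"
  have "map_pmf (\<lambda>(x, xs). (x \<noteq> h xs) # F xs) (pair_pmf ?U M)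
      = bind_pmf M (\<lambda>xs. map_pmf (\<lambda>b. b # F xs) (map_pmf (\<lambda>x. x \<noteq> h xs) ?U))"
    unfolding pair_pmf_def map_bind_pmf
    by (subst bind_commute_pmf) (simp add: map_pmf_def bind_return_pmf bind_assoc_pmf)
  also have "\<dots> = bind_pmf M (\<lambda>xs. map_pmf (\<lambda>b. b # F xs) ?U)"
    by (simp only: map_pmf_xor_uniform_bool)
  also have "\<dots> = map_pmf (\<lambda>(b, ys). b # ys) (pair_pmf ?U (map_pmf F M))"
    unfolding pair_pmf_def map_bind_pmf
    by (subst bind_commute_pmf) (simp add: map_pmf_def bind_return_pmf bind_assoc_pmf)
  finally show ?thesis .
qed

lemma shift_map_Cons:
  assumes "p < Suc m"
  shows "shift_map (Suc m) p g (x # xs) = (x \<noteq> g (take p xs)) # shift_map m p g xs"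
proof -
  have "[0..<Suc m - p] = 0 # map Suc [0..<m - p]"
    using assms by (simp add: Suc_diff_le upt_conv_Cons map_Suc_upt del: upt_Suc)
  then show ?thesis by (simp add: shift_map_def)
qed

lemma shift_map_eq_Nil: "n \<le> p \<Longrightarrow> shift_map n p g xs = []"
  by (simp add: shift_map_def)

lemma shift_map_uniform:
  "map_pmf (shift_map n p g) (pmf_of_set {xs. length xs = n})
   = pmf_of_set {ys. length ys = n - p}"
proof (induction n)
  case 0
  show ?case by (simp add: shift_map_eq_Nil map_pmf_const pmf_of_set_singleton)
next
  case (Suc m)
  show ?case
  proof (cases "Suc m \<le> p")
    case True
    then show ?thesis by (simp add: shift_map_eq_Nil map_pmf_const pmf_of_set_singleton)
  next
    case False
    have "map_pmf (shift_map (Suc m) p g) (pmf_of_set {xs. length xs = Suc m})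
        = map_pmf (\<lambda>(x, xs). (x \<noteq> g (take p xs)) # shift_map m p g xs)
            (pair_pmf (pmf_of_set UNIV) (pmf_of_set {xs. length xs = m}))"
      using False
      by (simp add: pmf_of_set_lists_length_Suc pmf.map_comp o_def split_def shift_map_Cons)
    also have "\<dots> = pmf_of_set {ys. length ys = Suc (m - p)}"
      by (simp only: map_pmf_xor_Cons_pair Suc.IH pmf_of_set_lists_length_Suc)
    finally show ?thesis
      using False by (simp add: Suc_diff_le)
  qed
qed

theorem mainTheorem6:
  fixes n p :: nat and g :: "bool list \<Rightarrow> bool"
  assumes "0 < n" and "0 < p" and "n - p \<ge> 1"
    and "only_nonlinear_anf p g"
  shows "map_pmf (shift_map n p g) (pmf_of_set {xs :: bool list. length xs = n})
         = pmf_of_set {ys :: bool list. length ys = n - p}"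
  by (rule shift_map_uniform)

end
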